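(* Under the assumptions of the context, with $\alpha_{w,t}\le c/(mt)$ for some $c>0$, let $d^{(w)}_t:=\|w_{t,m}-w'_{t,m}\|$ be the distance between the weights of the coupled runs after outer step $t$. Then, over the randomness of $B_t$, $$\mathbb E[d^{(w)}_t]+\frac{2L}{n\beta}\le\Big(1+\frac{\beta c}{t}(1+\alpha_{w,t}\beta+\alpha_\delta\varepsilon\psi\beta)^{m-1}\Big)\Big(\mathbb E[d^{(w)}_{t-1}]+\frac{2L}{n\beta}\Big).$$
   Context: Loss $h(w,\delta;z)$, $w\in W$ Euclidean, Euclidean norms, $\Delta=\{\delta:\|\delta\|_2\le\varepsilon\}$. Assumption 1: for every $z$, and all $w,w'\in W$, $\delta,\delta'\in\Delta$: $|h(w,\delta;z)-h(w',\delta';z)|^2\le L^2(\|w-w'\|^2+\|\delta-\delta'\|^2)$ and $|h(w,\delta;z)-h(w',\delta;z)|\le L_w\|w-w'\|$. Assumption 2: for every $z$, $h(\cdot,\cdot;z)$ is continuously differentiable and $\|\nabla_w h(w,\delta;z)-\nabla_w h(w',\delta';z)\|^2+\|\nabla_\delta h(w,\delta;z)-\nabla_\delta h(w',\delta';z)\|^2\le\beta^2(\|w-w'\|^2+\|\delta-\delta'\|^2)$. Gradient lower bound: there is $\psi>0$ such that with probability 1 every gradient $\nabla_\delta h(w,\delta;z)$ evaluated during training satisfies $\|\nabla_\delta h(w,\delta;z)\|\ge1/\psi$. Operators: $\mathcal P_\Delta(g)=\arg\min_{\delta\in\Delta}\|g-\delta\|$ and $\pi_\Delta(g)=\varepsilon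 g/\|g\|$ (the nearest extreme point of $\Delta$). Algorithm $A_{\text{Free}}$ (free step $m$, batch size $b$, weight step size $\alpha_{w,t}$ at outer step $t$, attack step size $\alpha_\delta$): for each outer step $t$: draw a uniformly random mini-batch $B_t\subset S$ of size $b$; initialize $\delta_j$ uniformly in $\Delta$ for each $z_j\in B_t$; $w_{t,0}=w_{t-1}$; for $i=0,\dots,m-1$: $g_w=\frac1b\sum_{z_j\in B_t}\nabla_w h(w_{t,i},\delta_j;z_j)$, $g_{\delta,j}=\nabla_\delta h(w_{t,i},\delta_j;z_j)$; $w_{t,i+1}=w_{t,i}-\alpha_{w,t}g_w$; $\delta_j\leftarrow\mathcal P_\Delta(\delta_j+\alpha_\delta\pi_\Delta(g_{\delta,j}))$; finally $w_t=w_{t,m}$. Coupling: $S,S'$ of size $n$ differ only in one sample $s$; both runs use the same initialization, the same mini-batch index sets (so the batches differ only when $s\in B_t$, which has probability $b/n$, independently of the past) and the same perturbation initializations. *)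

theory Defs
  imports "HOL-Analysis.Analysis" "HOL-Probability.Probability"
begin

definition pert_set :: "real \<Rightarrow> 'd::euclidean_space set" where
  "pert_set eps = cball 0 eps"

definition proj_Delta :: "real \<Rightarrow> 'd::euclidean_space \<Rightarrow> 'd" where
  "proj_Delta eps g = closest_point (pert_set eps) g"

text \<open>Nearest extreme point of Delta: eps g / norm g.\<close>
definition pi_Delta :: "real \<Rightarrow> 'd::euclidean_space \<Rightarrow> 'd" where
  "pi_Delta eps g = (eps / norm g) *\<^sub>R g"

definition batches :: "nat \<Rightarrow> nat \<Rightarrow> nat set set" where
  "batches n b = {B. B \<subseteq> {..<n} \<and> card B = b}"

text \<open>One inner ("free") step of A_Free on batch B of the data set S.
  State = (weights, perturbations indexed by sample index).
  gw, gd are the partial gradients of the loss in w and delta.\<close>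
definition free_inner_step ::
  "('w::euclidean_space \<Rightarrow> 'd::euclidean_space \<Rightarrow> 'z \<Rightarrow> 'w) \<Rightarrow>
   ('w \<Rightarrow> 'd \<Rightarrow> 'z \<Rightarrow> 'd) \<Rightarrow> real \<Rightarrow> real \<Rightarrow> real \<Rightarrow>
   (nat \<Rightarrow> 'z) \<Rightarrow> nat set \<Rightarrow> 'w \<times> (nat \<Rightarrow> 'd) \<Rightarrow> 'w \<times> (nat \<Rightarrow> 'd)" where
  "free_inner_step gw gd eps aw ad S B st =
     (let w = fst st; dl = snd st;
          g_w = (1 / real (card B)) *\<^sub>R (\<Sum>j\<in>B. gw w (dl j) (S j))
      in (w - aw *\<^sub>R g_w,
          (\<lambda>j. if j \<in> B
               then proj_Delta eps (dl j + ad *\<^sub>R pi_Delta eps (gd w (dl j) (S j)))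
               else dl j)))"

definition free_state ::
  "('w::euclidean_space \<Rightarrow> 'd::euclidean_space \<Rightarrow> 'z \<Rightarrow> 'w) \<Rightarrow>
   ('w \<Rightarrow> 'd \<Rightarrow> 'z \<Rightarrow> 'd) \<Rightarrow> real \<Rightarrow> real \<Rightarrow> real \<Rightarrow>
   (nat \<Rightarrow> 'z) \<Rightarrow> nat set \<Rightarrow> 'w \<Rightarrow> (nat \<Rightarrow> 'd) \<Rightarrow> nat \<Rightarrow> 'w \<times> (nat \<Rightarrow> 'd)" where
  "free_state gw gd eps aw ad S B w0 d0 i =
     (free_inner_step gw gd eps aw ad S B ^^ i) (w0, d0)"

definition free_outer ::
  "('w::euclidean_space \<Rightarrow> 'd::euclidean_space \<Rightarrow> 'z \<Rightarrow> 'w) \<Rightarrow>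
   ('w \<Rightarrow> 'd \<Rightarrow> 'z \<Rightarrow> 'd) \<Rightarrow> real \<Rightarrow> real \<Rightarrow> real \<Rightarrow> nat \<Rightarrow>
   (nat \<Rightarrow> 'z) \<Rightarrow> nat set \<Rightarrow> 'w \<Rightarrow> (nat \<Rightarrow> 'd) \<Rightarrow> 'w" where
  "free_outer gw gd eps aw ad m S B w0 d0 = fst (free_state gw gd eps aw ad S B w0 d0 m)"

end

theory Submission
  imports Defs
begin

text \<open>
  Fix a mini-batch B and compare the two coupled runs one inner step at a time. For a common
  sample j \<noteq> s, joint smoothness of the gradients and the fact that pi_Delta is
  (eps \<psi>)-Lipschitz on vectors of norm at least 1/\<psi> show that
  norm (w - w') + norm (\<delta>_j - \<delta>'_j) grows by at most the factor q = 1 + aw \<beta> + ad eps \<psi> \<beta>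
  per step. At the differing sample s only the bound norm (\<nabla>_w h) \<le> L (h is L-Lipschitz) is
  available; the resulting additive 2L equals card B * \<beta> * K for K = 2L/(b\<beta>), so it is absorbed
  by shifting the distance by K. Summing the m weight updates gives
  norm (w_m - w'_m) \<le> d + aw \<beta> m q^(m-1) (d + K), and averaging over B, which contains s with
  probability b/n, turns K into 2L/(n\<beta>).
\<close>

lemma norm_normalize_diff_sq_le:
  fixes u v :: "'a::real_inner"
  assumes "u \<noteq> 0" "v \<noteq> 0"
  shows "norm u * norm v * (norm (u /\<^sub>R norm u - v /\<^sub>R norm v))\<^sup>2 \<le> (norm (u - v))\<^sup>2"
proof -
  have pos: "norm u > 0" "norm v > 0" using assms by auto
  have "(norm (u /\<^sub>R norm u - v /\<^sub>R norm v))\<^sup>2 = 2 - 2 * (u \<bullet> v) / (norm u * norm v)"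
  proof -
    have uv: "u \<bullet> u = norm u * norm u" "v \<bullet> v = norm v * norm v"
      by (simp_all add: dot_square_norm power2_eq_square)
    show ?thesis unfolding power2_norm_eq_inner
      using pos by (simp add: inner_diff_left inner_diff_right inner_commute uv field_simps)
  qed
  hence "norm u * norm v * (norm (u /\<^sub>R norm u - v /\<^sub>R norm v))\<^sup>2 = 2 * norm u * norm v - 2 * (u \<bullet> v)"
    using pos by (simp add: field_simps)
  also have "\<dots> \<le> (norm u)\<^sup>2 + (norm v)\<^sup>2 - 2 * (u \<bullet> v)"
    using sum_squares_bound[of "norm u" "norm v"] by simp
  also have "\<dots> = (norm (u - v))\<^sup>2"
    by (simp add: power2_norm_eq_inner inner_diff_left inner_diff_right inner_commute)
  finally show ?thesis .
qed

lemma pi_Delta_lipschitz: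
  fixes u v :: "'d::euclidean_space"
  assumes "norm u \<ge> r" "norm v \<ge> r" "r > 0" "eps \<ge> 0"
  shows "norm (pi_Delta eps u - pi_Delta eps v) \<le> eps / r * norm (u - v)"
proof -
  have nz: "u \<noteq> 0" "v \<noteq> 0" using assms by auto
  let ?x = "norm (u /\<^sub>R norm u - v /\<^sub>R norm v)"
  have "(r * ?x)\<^sup>2 \<le> norm u * norm v * ?x\<^sup>2"
    unfolding power_mult_distrib power2_eq_square[of r]
    by (intro mult_right_mono mult_mono) (use assms in auto)
  also have "\<dots> \<le> (norm (u - v))\<^sup>2" by (rule norm_normalize_diff_sq_le[OF nz])
  finally have "r * ?x \<le> norm (u - v)" by (rule power2_le_imp_le) simp
  hence "eps * (r * ?x) \<le> eps * norm (u - v)" using assms(4) by (rule mult_left_mono)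
  moreover have "pi_Delta eps u - pi_Delta eps v = eps *\<^sub>R (u /\<^sub>R norm u - v /\<^sub>R norm v)"
    by (simp add: pi_Delta_def scaleR_diff_right divide_inverse mult.commute)
  ultimately have "r * norm (pi_Delta eps u - pi_Delta eps v) \<le> eps * norm (u - v)"
    using assms(4) by (simp add: mult.left_commute)
  thus ?thesis using assms(3) by (simp add: field_simps)
qed

lemma proj_Delta_in_pert_set:
  assumes "eps \<ge> 0"
  shows "proj_Delta eps x \<in> pert_set eps"
  using assms closest_point_in_set[of "cball 0 eps" x]
  by (simp add: proj_Delta_def pert_set_def)

lemma proj_Delta_nonexpansive:
  assumes "eps \<ge> 0"
  shows "norm (proj_Delta eps x - proj_Delta eps y) \<le> norm (x - y)"
  using closest_point_lipschitz[of "pert_set eps" x y] assms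
  by (simp add: proj_Delta_def pert_set_def dist_norm)

lemma gradient_norm_le_lipschitz:
  fixes f :: "'a::real_inner \<Rightarrow> real"
  assumes der: "(f has_derivative (\<lambda>v. g \<bullet> v)) (at w)"
    and lip: "\<And>x y. \<bar>f x - f y\<bar> \<le> L * norm (x - y)" and "L \<ge> 0"
  shows "norm g \<le> L"
proof -
  define \<phi> where "\<phi> t = f (w + t *\<^sub>R g)" for t :: real
  have line: "((\<lambda>t::real. w + t *\<^sub>R g) has_derivative (\<lambda>t. t *\<^sub>R g)) (at 0)"
    by (auto intro!: derivative_eq_intros)
  have "(f has_derivative (\<lambda>v. g \<bullet> v)) (at (w + 0 *\<^sub>R g))"
    using der by simp
  from has_derivative_compose[OF line this]
  have "(\<phi> has_derivative (\<lambda>t. g \<bullet> (t *\<^sub>R g))) (at 0)"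
    unfolding \<phi>_def .
  hence "(\<phi> has_field_derivative (g \<bullet> g)) (at 0)"
    by (simp add: has_field_derivative_def mult_commute_abs)
  hence lim: "((\<lambda>y. (\<phi> y - \<phi> 0) / (y - 0)) \<longlongrightarrow> g \<bullet> g) (at (0::real))"
    by (simp add: has_field_derivative_iff)
  have "\<forall>\<^sub>F y in at (0::real). \<bar>(\<phi> y - \<phi> 0) / (y - 0)\<bar> \<le> L * norm g"
  proof (rule always_eventually, intro allI)
    fix y :: real
    have "\<bar>\<phi> y - \<phi> 0\<bar> \<le> \<bar>y\<bar> * (L * norm g)"
      using lip[of "w + y *\<^sub>R g" w] by (simp add: \<phi>_def mult.left_commute)
    thus "\<bar>(\<phi> y - \<phi> 0) / (y - 0)\<bar> \<le> L * norm g"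
      by (cases "y = 0") (use \<open>L \<ge> 0\<close> in \<open>auto simp: abs_divide divide_le_eq mult.commute\<close>)
  qed
  hence "\<bar>g \<bullet> g\<bar> \<le> L * norm g"
    by (intro tendsto_le[OF _ tendsto_const tendsto_rabs[OF lim]]) simp
  hence "norm g * norm g \<le> L * norm g"
    by (simp add: dot_square_norm power2_eq_square)
  thus ?thesis
    by (cases "norm g = 0") (use \<open>L \<ge> 0\<close> in auto)
qed

lemma partial_gradient_norm_le_lipschitz:
  fixes f :: "'a::real_inner \<Rightarrow> 'b::real_inner \<Rightarrow> real"
  assumes der: "((\<lambda>p. f (fst p) (snd p)) has_derivative (\<lambda>v. g1 \<bullet> fst v + g2 \<bullet> snd v))
      (at (w, \<delta>) within UNIV \<times> D)"
    and "\<delta> \<in> D"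
    and lip: "\<And>x y \<delta>'. \<delta>' \<in> D \<Longrightarrow> \<bar>f x \<delta> - f y \<delta>'\<bar>\<^sup>2 \<le> L\<^sup>2 * ((norm (x - y))\<^sup>2 + (norm (\<delta> - \<delta>'))\<^sup>2)"
    and "L \<ge> 0"
  shows "norm g1 \<le> L"
proof (rule gradient_norm_le_lipschitz[OF _ _ \<open>L \<ge> 0\<close>])
  have embed: "((\<lambda>x. (x, \<delta>)) has_derivative (\<lambda>v. (v, 0))) (at w)"
    by (auto intro!: derivative_eq_intros)
  have "((\<lambda>p. f (fst p) (snd p)) has_derivative (\<lambda>v. g1 \<bullet> fst v + g2 \<bullet> snd v))
      (at (w, \<delta>) within range (\<lambda>x. (x, \<delta>)))"
    by (rule has_derivative_subset[OF der]) (use \<open>\<delta> \<in> D\<close> in auto)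
  from has_derivative_in_compose[OF embed this]
  show "((\<lambda>x. f x \<delta>) has_derivative (\<lambda>v. g1 \<bullet> v)) (at w)" by simp
  fix x y
  have "\<bar>f x \<delta> - f y \<delta>\<bar>\<^sup>2 \<le> (L * norm (x - y))\<^sup>2"
    using lip[OF \<open>\<delta> \<in> D\<close>, of x y] by (simp add: power_mult_distrib)
  thus "\<bar>f x \<delta> - f y \<delta>\<bar> \<le> L * norm (x - y)"
    by (rule power2_le_imp_le) (use \<open>L \<ge> 0\<close> in simp)
qed

lemma le_of_sum_squares_le:
  fixes x y c u v :: real
  assumes "x\<^sup>2 + y\<^sup>2 \<le> c\<^sup>2 * (u\<^sup>2 + v\<^sup>2)" "c \<ge> 0" "u \<ge> 0" "v \<ge> 0"
  shows "x \<le> c * (u + v)"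
proof -
  have "x \<le> sqrt (x\<^sup>2 + y\<^sup>2)" by simp
  also have "\<dots> \<le> sqrt (c\<^sup>2 * (u\<^sup>2 + v\<^sup>2))" using assms(1) by (rule real_sqrt_le_mono)
  also have "\<dots> = c * sqrt (u\<^sup>2 + v\<^sup>2)" using assms(2) by (simp add: real_sqrt_mult)
  also have "\<dots> \<le> c * (u + v)"
    using assms(2-4) by (intro mult_left_mono sqrt_sum_squares_le_sum)
  finally show ?thesis .
qed

lemma sum_le_card_mult_plus_exceptional:
  fixes x :: "'a \<Rightarrow> real"
  assumes "finite B"
    and "\<And>j. j \<in> B - {s} \<Longrightarrow> x j \<le> y"
    and "s \<in> B \<Longrightarrow> x s \<le> y + e"
  shows "(\<Sum>j\<in>B. x j) \<le> real (card B) * y + (if s \<in> B then e else 0)"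
proof -
  have "(\<Sum>j\<in>B. x j) \<le> (\<Sum>j\<in>B. y + (if j = s then e else 0))"
    by (rule sum_mono) (use assms(2,3) in force)
  also have "\<dots> = real (card B) * y + (if s \<in> B then e else 0)"
    using assms(1) by (simp add: sum.distrib)
  finally show ?thesis .
qed

lemma card_batches_containing:
  assumes "s < n" "1 \<le> b"
  shows "real (card {B \<in> batches n b. s \<in> B}) * real n = real b * real (card (batches n b))"
proof -
  let ?C = "{C. C \<subseteq> {..<n} - {s} \<and> card C = b - 1}"
  have "bij_betw (insert s) ?C {B \<in> batches n b. s \<in> B}"
  proof (rule bij_betw_imageI)
    show "inj_on (insert s) ?C" by (auto simp: inj_on_def)
    show "insert s ` ?C = {B \<in> batches n b. s \<in> B}"
    proof (intro equalityI subsetI)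
      fix B assume "B \<in> insert s ` ?C"
      then obtain C where "C \<subseteq> {..<n} - {s}" "card C = b - 1" "B = insert s C" by auto
      moreover have "finite C" "s \<notin> C"
        using \<open>C \<subseteq> {..<n} - {s}\<close> finite_subset by auto
      ultimately show "B \<in> {B \<in> batches n b. s \<in> B}"
        using assms by (auto simp: batches_def)
    next
      fix B assume B: "B \<in> {B \<in> batches n b. s \<in> B}"
      hence "finite B" by (auto simp: batches_def intro: finite_subset)
      with B have "B - {s} \<in> ?C" by (auto simp: batches_def)
      moreover have "B = insert s (B - {s})" using B by auto
      ultimately show "B \<in> insert s ` ?C" by blast
    qed
  qed
  hence "card {B \<in> batches n b. s \<in> B} = (n - 1) choose (b - 1)"
    using bij_betw_same_card n_subsets[of "{..<n} - {s}" "b - 1"] assms by fastforce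
  moreover have "card (batches n b) = n choose b"
    using n_subsets[of "{..<n}" b] by (simp add: batches_def)
  moreover have "b * (n choose b) = n * ((n - 1) choose (b - 1))"
    using times_binomial_minus1_eq[of b n] assms by simp
  ultimately show ?thesis by (metis mult.commute of_nat_mult)
qed

lemma expectation_batches_le:
  fixes f :: "nat set \<Rightarrow> real"
  assumes "s < n" "1 \<le> b" "b \<le> n"
    and f: "\<And>B. B \<in> batches n b \<Longrightarrow> f B \<le> x + (if s \<in> B then y else 0)"
  shows "measure_pmf.expectation (pmf_of_set (batches n b)) f \<le> x + real b / real n * y"
proof -
  have fin: "finite (batches n b)"
    by (rule finite_subset[of _ "Pow {..<n}"]) (auto simp: batches_def)
  have ne: "batches n b \<noteq> {}"
    using assms(3) by (auto simp: batches_def intro!: exI[of _ "{..<b}"])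
  define N where "N = real (card (batches n b))"
  define M where "M = real (card {B \<in> batches n b. s \<in> B})"
  have "N > 0" using fin ne by (simp add: N_def card_gt_0_iff)
  have "M = real b / real n * N"
    using card_batches_containing[OF assms(1,2)] assms(1)
    by (simp add: M_def N_def field_simps)
  have "measure_pmf.expectation (pmf_of_set (batches n b)) f = (\<Sum>B\<in>batches n b. f B) / N"
    using integral_pmf_of_set[OF ne fin] by (simp add: N_def)
  also have "\<dots> \<le> (\<Sum>B\<in>batches n b. x + (if s \<in> B then y else 0)) / N"
    using \<open>N > 0\<close> f by (intro divide_right_mono sum_mono) auto
  also have "(\<Sum>B\<in>batches n b. x + (if s \<in> B then y else 0)) = N * x + M * y"
    using fin by (simp add: sum.distrib sum.If_cases N_def M_def Int_def conj_commute)
  also have "(N * x + M * y) / N = x + real b / real n * y"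
    using \<open>N > 0\<close> by (simp add: \<open>M = real b / real n * N\<close> field_simps)
  finally show ?thesis .
qed

locale free_adversarial_training =
  fixes gw :: "'w::euclidean_space \<Rightarrow> 'd::euclidean_space \<Rightarrow> 'z \<Rightarrow> 'w"
    and gd :: "'w \<Rightarrow> 'd \<Rightarrow> 'z \<Rightarrow> 'd"
    and eps aw ad L \<beta> \<psi> :: real
  assumes eps_pos: "eps > 0" and aw_pos: "aw > 0" and ad_pos: "ad > 0"
    and beta_pos: "\<beta> > 0" and psi_pos: "\<psi> > 0"
    and gw_bounded: "\<And>z w \<delta>. \<delta> \<in> pert_set eps \<Longrightarrow> norm (gw w \<delta> z) \<le> L"
    and smooth: "\<And>z w w' \<delta> \<delta>'. \<delta> \<in> pert_set eps \<Longrightarrow> \<delta>' \<in> pert_set eps \<Longrightarrow>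
        (norm (gw w \<delta> z - gw w' \<delta>' z))\<^sup>2 + (norm (gd w \<delta> z - gd w' \<delta>' z))\<^sup>2
          \<le> \<beta>\<^sup>2 * ((norm (w - w'))\<^sup>2 + (norm (\<delta> - \<delta>'))\<^sup>2)"
begin

abbreviation step :: "(nat \<Rightarrow> 'z) \<Rightarrow> nat set \<Rightarrow> 'w \<times> (nat \<Rightarrow> 'd) \<Rightarrow> 'w \<times> (nat \<Rightarrow> 'd)" where
  "step \<equiv> free_inner_step gw gd eps aw ad"

abbreviation run :: "(nat \<Rightarrow> 'z) \<Rightarrow> nat set \<Rightarrow> 'w \<Rightarrow> (nat \<Rightarrow> 'd) \<Rightarrow> nat \<Rightarrow> 'w \<times> (nat \<Rightarrow> 'd)" where
  "run \<equiv> free_state gw gd eps aw ad"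

lemma run_Suc: "run S B w0 d0 (Suc i) = step S B (run S B w0 d0 i)"
  by (simp add: free_state_def)

lemma run_in_pert_set:
  assumes "\<And>j. d0 j \<in> pert_set eps"
  shows "snd (run S B w0 d0 i) j \<in> pert_set eps"
  using assms eps_pos
  by (induction i) (auto simp: free_state_def free_inner_step_def Let_def proj_Delta_in_pert_set)

lemma gradient_dist_le:
  assumes "\<delta> \<in> pert_set eps" "\<delta>' \<in> pert_set eps"
  shows "norm (gw w \<delta> z - gw w' \<delta>' z) \<le> \<beta> * (norm (w - w') + norm (\<delta> - \<delta>'))"
    and "norm (gd w \<delta> z - gd w' \<delta>' z) \<le> \<beta> * (norm (w - w') + norm (\<delta> - \<delta>'))"
  using smooth[OF assms, of w z w'] beta_pos
  by (auto intro: le_of_sum_squares_le simp: add.commute[of "(norm (gw _ _ _ - gw _ _ _))\<^sup>2"])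

lemma step_weight_dist_le:
  assumes "finite B" "B \<noteq> {}"
  shows "norm (fst (step S B st) - fst (step S' B st'))
    \<le> norm (fst st - fst st')
      + aw / card B * (\<Sum>j\<in>B. norm (gw (fst st) (snd st j) (S j) - gw (fst st') (snd st' j) (S' j)))"
proof -
  let ?g = "\<lambda>j. gw (fst st) (snd st j) (S j) - gw (fst st') (snd st' j) (S' j)"
  have "fst (step S B st) - fst (step S' B st') = (fst st - fst st') - (aw / card B) *\<^sub>R (\<Sum>j\<in>B. ?g j)"
    by (simp add: free_inner_step_def Let_def sum_subtractf scaleR_diff_right algebra_simps)
  also have "norm \<dots> \<le> norm (fst st - fst st') + aw / card B * norm (\<Sum>j\<in>B. ?g j)"
    using norm_triangle_ineq4[of "fst st - fst st'" "(aw / card B) *\<^sub>R (\<Sum>j\<in>B. ?g j)"] aw_pos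
    by simp
  also have "\<dots> \<le> norm (fst st - fst st') + aw / card B * (\<Sum>j\<in>B. norm (?g j))"
    using aw_pos by (intro add_left_mono mult_left_mono norm_sum) auto
  finally show ?thesis .
qed

lemma step_pert_dist_le:
  assumes "j \<in> B"
    and "norm (gd (fst st) (snd st j) (S j)) \<ge> 1 / \<psi>"
    and "norm (gd (fst st') (snd st' j) (S' j)) \<ge> 1 / \<psi>"
  shows "norm (snd (step S B st) j - snd (step S' B st') j)
    \<le> norm (snd st j - snd st' j)
      + ad * eps * \<psi> * norm (gd (fst st) (snd st j) (S j) - gd (fst st') (snd st' j) (S' j))"
proof -
  let ?u = "gd (fst st) (snd st j) (S j)" and ?v = "gd (fst st') (snd st' j) (S' j)"
  have "norm (snd (step S B st) j - snd (step S' B st') j)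
      \<le> norm ((snd st j + ad *\<^sub>R pi_Delta eps ?u) - (snd st' j + ad *\<^sub>R pi_Delta eps ?v))"
    using assms(1) eps_pos
    by (simp add: free_inner_step_def Let_def proj_Delta_nonexpansive)
  also have "\<dots> = norm ((snd st j - snd st' j) + ad *\<^sub>R (pi_Delta eps ?u - pi_Delta eps ?v))"
    by (simp add: algebra_simps)
  also have "\<dots> \<le> norm (snd st j - snd st' j) + ad * norm (pi_Delta eps ?u - pi_Delta eps ?v)"
    using norm_triangle_ineq[of "snd st j - snd st' j" "ad *\<^sub>R (pi_Delta eps ?u - pi_Delta eps ?v)"] ad_pos
    by simp
  also have "\<dots> \<le> norm (snd st j - snd st' j) + ad * (eps * \<psi> * norm (?u - ?v))"
    using pi_Delta_lipschitz[OF assms(2,3)] eps_pos psi_pos ad_pos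
    by (intro add_left_mono mult_left_mono) auto
  finally show ?thesis by (simp add: mult.assoc)
qed

lemma coupled_step_dist_le:
  assumes "finite B" "B \<noteq> {}"
    and S_S': "\<And>j. j \<noteq> s \<Longrightarrow> S' j = S j"
    and in_pert: "\<And>j. snd st j \<in> pert_set eps" "\<And>j. snd st' j \<in> pert_set eps"
    and lb: "\<And>j. j \<in> B \<Longrightarrow> norm (gd (fst st) (snd st j) (S j)) \<ge> 1 / \<psi>"
    and lb': "\<And>j. j \<in> B \<Longrightarrow> norm (gd (fst st') (snd st' j) (S' j)) \<ge> 1 / \<psi>"
    and K: "0 \<le> K" "K \<le> Q" "s \<in> B \<Longrightarrow> 2 * L \<le> card B * \<beta> * K"
    and inv: "\<And>j. j \<in> B - {s} \<Longrightarrow> norm (fst st - fst st') + norm (snd st j - snd st' j) \<le> Q - K"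
  shows "norm (fst (step S B st) - fst (step S' B st')) \<le> norm (fst st - fst st') + aw * \<beta> * Q"
    and "\<And>j. j \<in> B - {s} \<Longrightarrow>
      norm (fst (step S B st) - fst (step S' B st')) + norm (snd (step S B st) j - snd (step S' B st') j)
        \<le> (1 + aw * \<beta> + ad * eps * \<psi> * \<beta>) * Q - K"
proof -
  let ?D = "norm (fst st - fst st')" and ?E = "\<lambda>j. norm (snd st j - snd st' j)"
  let ?gw = "\<lambda>j. norm (gw (fst st) (snd st j) (S j) - gw (fst st') (snd st' j) (S' j))"
  let ?gd = "\<lambda>j. norm (gd (fst st) (snd st j) (S j) - gd (fst st') (snd st' j) (S' j))"
  have grad_dist_off_s: "?gw j \<le> \<beta> * (Q - K)" "?gd j \<le> \<beta> * (Q - K)" if "j \<in> B - {s}" for j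
  proof -
    have "\<beta> * (?D + ?E j) \<le> \<beta> * (Q - K)"
      using inv[OF that] beta_pos by (intro mult_left_mono) auto
    with gradient_dist_le[OF in_pert(1)[of j] in_pert(2)[of j], where w="fst st" and w'="fst st'" and z="S j"]
      S_S'[of j] that
    show "?gw j \<le> \<beta> * (Q - K)" "?gd j \<le> \<beta> * (Q - K)" by auto
  qed
  have gw_dist_at_s: "?gw s \<le> \<beta> * (Q - K) + 2 * L"
  proof -
    have "?gw s \<le> norm (gw (fst st) (snd st s) (S s)) + norm (gw (fst st') (snd st' s) (S' s))"
      by (rule norm_triangle_ineq4)
    also have "\<dots> \<le> 2 * L"
      using add_mono[OF gw_bounded[OF in_pert(1)] gw_bounded[OF in_pert(2)]] by simp
    moreover have "0 \<le> \<beta> * (Q - K)" using K(2) beta_pos by simp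
    ultimately show ?thesis by linarith
  qed
  have "(\<Sum>j\<in>B. ?gw j) \<le> card B * (\<beta> * (Q - K)) + (if s \<in> B then 2 * L else 0)"
    using grad_dist_off_s(1) gw_dist_at_s by (intro sum_le_card_mult_plus_exceptional[OF \<open>finite B\<close>])
  also have "\<dots> \<le> card B * \<beta> * Q"
    using K beta_pos by (auto simp: algebra_simps)
  finally have "aw / card B * (\<Sum>j\<in>B. ?gw j) \<le> aw * \<beta> * Q"
    using aw_pos \<open>finite B\<close> \<open>B \<noteq> {}\<close> by (simp add: divide_le_eq card_gt_0_iff mult_left_mono mult_ac)
  with step_weight_dist_le[OF \<open>finite B\<close> \<open>B \<noteq> {}\<close>, of S st S' st']
  show weight: "norm (fst (step S B st) - fst (step S' B st')) \<le> ?D + aw * \<beta> * Q"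
    by linarith
  fix j assume j: "j \<in> B - {s}"
  have "norm (snd (step S B st) j - snd (step S' B st') j) \<le> ?E j + ad * eps * \<psi> * ?gd j"
    using j by (intro step_pert_dist_le lb lb') auto
  also have "\<dots> \<le> ?E j + ad * eps * \<psi> * \<beta> * (Q - K)"
    using grad_dist_off_s(2)[OF j] ad_pos eps_pos psi_pos by (simp add: mult.assoc mult_left_mono)
  finally have pert: "norm (snd (step S B st) j - snd (step S' B st') j) \<le> ?E j + ad * eps * \<psi> * \<beta> * (Q - K)" .
  have "ad * eps * \<psi> * \<beta> * (Q - K) \<le> ad * eps * \<psi> * \<beta> * Q"
    using K(1) ad_pos eps_pos psi_pos beta_pos by (simp add: mult_left_mono)
  moreover have "(1 + aw * \<beta> + ad * eps * \<psi> * \<beta>) * Q - K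
      = Q - K + aw * \<beta> * Q + ad * eps * \<psi> * \<beta> * Q"
    by (simp add: algebra_simps)
  ultimately show "norm (fst (step S B st) - fst (step S' B st')) + norm (snd (step S B st) j - snd (step S' B st') j)
        \<le> (1 + aw * \<beta> + ad * eps * \<psi> * \<beta>) * Q - K"
    using weight pert inv[OF j] by linarith
qed

lemma coupled_run_dist_le:
  assumes "finite B" "B \<noteq> {}"
    and S_S': "\<And>j. j \<noteq> s \<Longrightarrow> S' j = S j"
    and d0: "\<And>j. d0 j \<in> pert_set eps"
    and lb: "\<And>i j. i < m \<Longrightarrow> j \<in> B \<Longrightarrow>
      norm (gd (fst (run S B w0 d0 i)) (snd (run S B w0 d0 i) j) (S j)) \<ge> 1 / \<psi>"
    and lb': "\<And>i j. i < m \<Longrightarrow> j \<in> B \<Longrightarrow>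
      norm (gd (fst (run S' B w0' d0 i)) (snd (run S' B w0' d0 i) j) (S' j)) \<ge> 1 / \<psi>"
    and K: "0 \<le> K" "s \<in> B \<Longrightarrow> 2 * L \<le> card B * \<beta> * K"
    and "i \<le> m"
  defines "q \<equiv> 1 + aw * \<beta> + ad * eps * \<psi> * \<beta>" and "d \<equiv> norm (w0 - w0')"
  shows "norm (fst (run S B w0 d0 i) - fst (run S' B w0' d0 i)) \<le> d + aw * \<beta> * (\<Sum>k<i. q ^ k) * (d + K)"
proof -
  let ?st = "run S B w0 d0" and ?st' = "run S' B w0' d0"
  have "q \<ge> 1" "d \<ge> 0"
    using aw_pos ad_pos eps_pos psi_pos beta_pos by (simp_all add: q_def d_def)
  have "(\<forall>j\<in>B - {s}. norm (fst (?st i) - fst (?st' i)) + norm (snd (?st i) j - snd (?st' i) j)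
          \<le> q ^ i * (d + K) - K)
      \<and> norm (fst (?st i) - fst (?st' i)) \<le> d + aw * \<beta> * (\<Sum>k<i. q ^ k) * (d + K)"
    using \<open>i \<le> m\<close>
  proof (induction i)
    case 0
    show ?case by (simp add: free_state_def d_def)
  next
    case (Suc i)
    have "d + K \<le> q ^ i * (d + K)"
      using \<open>q \<ge> 1\<close> \<open>d \<ge> 0\<close> K(1) by (simp add: mult_le_cancel_right1)
    hence KQ: "K \<le> q ^ i * (d + K)" using \<open>d \<ge> 0\<close> by linarith
    from Suc have IH:
      "\<And>j. j \<in> B - {s} \<Longrightarrow> norm (fst (?st i) - fst (?st' i)) + norm (snd (?st i) j - snd (?st' i) j)
          \<le> q ^ i * (d + K) - K"
      "norm (fst (?st i) - fst (?st' i)) \<le> d + aw * \<beta> * (\<Sum>k<i. q ^ k) * (d + K)"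
      by auto
    have "i < m" using Suc.prems by simp
    note step = coupled_step_dist_le[where s = s and st = "?st i" and st' = "?st' i",
        OF \<open>finite B\<close> \<open>B \<noteq> {}\<close> S_S' run_in_pert_set[OF d0] run_in_pert_set[OF d0]
        lb[OF \<open>i < m\<close>] lb'[OF \<open>i < m\<close>] K(1) KQ K(2) IH(1)]
    have "(\<Sum>k<Suc i. q ^ k) = (\<Sum>k<i. q ^ k) + q ^ i" by simp
    with step(1) IH(2) show ?case
      using step(2) by (auto simp: run_Suc q_def algebra_simps)
  qed
  thus ?thesis by simp
qed

lemma coupled_outer_dist_le:
  assumes "finite B" "B \<noteq> {}"
    and "\<And>j. j \<noteq> s \<Longrightarrow> S' j = S j"
    and "\<And>j. d0 j \<in> pert_set eps"
    and "\<And>i j. i < m \<Longrightarrow> j \<in> B \<Longrightarrow>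
      norm (gd (fst (run S B w0 d0 i)) (snd (run S B w0 d0 i) j) (S j)) \<ge> 1 / \<psi>"
    and "\<And>i j. i < m \<Longrightarrow> j \<in> B \<Longrightarrow>
      norm (gd (fst (run S' B w0' d0 i)) (snd (run S' B w0' d0 i) j) (S' j)) \<ge> 1 / \<psi>"
    and K: "0 \<le> K" "s \<in> B \<Longrightarrow> 2 * L \<le> card B * \<beta> * K"
  defines "q \<equiv> 1 + aw * \<beta> + ad * eps * \<psi> * \<beta>" and "d \<equiv> norm (w0 - w0')"
  shows "norm (free_outer gw gd eps aw ad m S B w0 d0 - free_outer gw gd eps aw ad m S' B w0' d0)
    \<le> d + aw * \<beta> * m * q ^ (m - 1) * (d + K)"
proof -
  have "q \<ge> 1" "d + K \<ge> 0"
    using aw_pos ad_pos eps_pos psi_pos beta_pos K(1) by (simp_all add: q_def d_def)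
  have "(\<Sum>k<m. q ^ k) \<le> (\<Sum>k<m. q ^ (m - 1))"
    using \<open>q \<ge> 1\<close> by (intro sum_mono power_increasing) auto
  hence "(\<Sum>k<m. q ^ k) * (d + K) \<le> m * q ^ (m - 1) * (d + K)"
    using \<open>d + K \<ge> 0\<close> by (simp add: mult_right_mono)
  hence "aw * \<beta> * (\<Sum>k<m. q ^ k) * (d + K) \<le> aw * \<beta> * m * q ^ (m - 1) * (d + K)"
    using aw_pos beta_pos by (simp add: mult_left_mono mult.assoc)
  with coupled_run_dist_le[where s = s and m = m, OF assms(1-8) order_refl]
  show ?thesis unfolding free_outer_def q_def d_def by linarith
qed

end

theorem lemma6:
  fixes h :: "'w::euclidean_space \<Rightarrow> 'd::euclidean_space \<Rightarrow> 'z \<Rightarrow> real"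
    and gw :: "'w \<Rightarrow> 'd \<Rightarrow> 'z \<Rightarrow> 'w"
    and gd :: "'w \<Rightarrow> 'd \<Rightarrow> 'z \<Rightarrow> 'd"
    and S S' :: "nat \<Rightarrow> 'z"
    and d0 :: "nat \<Rightarrow> 'd"
    and w_prev w'_prev :: 'w
    and L Lw \<beta> \<psi> eps c aw ad :: real
    and n b m t s :: nat
  assumes eps_pos: "eps > 0"
    and L_pos: "L > 0" and Lw_nonneg: "Lw \<ge> 0" and beta_pos: "\<beta> > 0" and psi_pos: "\<psi> > 0"
    and grad: "\<And>z w \<delta>. \<delta> \<in> pert_set eps \<Longrightarrow>
        ((\<lambda>p. h (fst p) (snd p) z) has_derivative
           (\<lambda>v. gw w \<delta> z \<bullet> fst v + gd w \<delta> z \<bullet> snd v))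
        (at (w, \<delta>) within (UNIV \<times> pert_set eps))"
    and grad_cont: "\<And>z. continuous_on (UNIV \<times> pert_set eps) (\<lambda>p. gw (fst p) (snd p) z)"
    and grad_cont': "\<And>z. continuous_on (UNIV \<times> pert_set eps) (\<lambda>p. gd (fst p) (snd p) z)"
    \<comment> \<open>Assumption 1\<close>
    and lip: "\<And>z w w' \<delta> \<delta>'. \<delta> \<in> pert_set eps \<Longrightarrow> \<delta>' \<in> pert_set eps \<Longrightarrow>
        \<bar>h w \<delta> z - h w' \<delta>' z\<bar>\<^sup>2 \<le> L\<^sup>2 * ((norm (w - w'))\<^sup>2 + (norm (\<delta> - \<delta>'))\<^sup>2)"
    and lip_w: "\<And>z w w' \<delta>. \<delta> \<in> pert_set eps \<Longrightarrow>
        \<bar>h w \<delta> z - h w' \<delta> z\<bar> \<le> Lw * norm (w - w')"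
    \<comment> \<open>Assumption 2\<close>
    and smooth: "\<And>z w w' \<delta> \<delta>'. \<delta> \<in> pert_set eps \<Longrightarrow> \<delta>' \<in> pert_set eps \<Longrightarrow>
        (norm (gw w \<delta> z - gw w' \<delta>' z))\<^sup>2 + (norm (gd w \<delta> z - gd w' \<delta>' z))\<^sup>2
          \<le> \<beta>\<^sup>2 * ((norm (w - w'))\<^sup>2 + (norm (\<delta> - \<delta>'))\<^sup>2)"
    and s_lt: "s < n"
    and S_S': "\<And>j. j \<noteq> s \<Longrightarrow> S' j = S j"
    and b_pos: "1 \<le> b" and b_le: "b \<le> n"
    and m_pos: "1 \<le> m"
    and t_pos: "1 \<le> t"
    and c_pos: "c > 0"
    and aw_pos: "aw > 0" and aw_le: "aw \<le> c / (real m * real t)"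
    and ad_pos: "ad > 0"
    and d0_in: "\<And>j. d0 j \<in> pert_set eps"
    and grad_lb: "\<And>B i j. B \<in> batches n b \<Longrightarrow> i < m \<Longrightarrow> j \<in> B \<Longrightarrow>
        norm (gd (fst (free_state gw gd eps aw ad S B w_prev d0 i))
                 (snd (free_state gw gd eps aw ad S B w_prev d0 i) j) (S j)) \<ge> 1 / \<psi>"
    and grad_lb': "\<And>B i j. B \<in> batches n b \<Longrightarrow> i < m \<Longrightarrow> j \<in> B \<Longrightarrow>
        norm (gd (fst (free_state gw gd eps aw ad S' B w'_prev d0 i))
                 (snd (free_state gw gd eps aw ad S' B w'_prev d0 i) j) (S' j)) \<ge> 1 / \<psi>"
  shows "measure_pmf.expectation (pmf_of_set (batches n b))
           (\<lambda>B. norm (free_outer gw gd eps aw ad m S B w_prev d0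
                       - free_outer gw gd eps aw ad m S' B w'_prev d0))
         + 2 * L / (real n * \<beta>)
       \<le> (1 + \<beta> * c / real t * (1 + aw * \<beta> + ad * eps * \<psi> * \<beta>) ^ (m - 1))
         * (norm (w_prev - w'_prev) + 2 * L / (real n * \<beta>))"
proof -
  have gw_bounded: "norm (gw w \<delta> z) \<le> L" if "\<delta> \<in> pert_set eps" for z w \<delta>
    using lip[OF that] L_pos by (intro partial_gradient_norm_le_lipschitz[OF grad[OF that] that]) auto
  interpret free_adversarial_training gw gd eps aw ad L \<beta> \<psi>
    using eps_pos aw_pos ad_pos beta_pos psi_pos gw_bounded smooth by unfold_locales auto
  define q where "q = 1 + aw * \<beta> + ad * eps * \<psi> * \<beta>"
  define d where "d = norm (w_prev - w'_prev)"
  define r where "r = \<beta> * c / real t * q ^ (m - 1)"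
  define \<kappa> where "\<kappa> = 2 * L / (real b * \<beta>)"
  define X where "X = 2 * L / (real n * \<beta>)"
  have "aw * \<beta> * m \<le> \<beta> * c / real t"
    using aw_le m_pos beta_pos mult_right_mono[OF aw_le, of "\<beta> * m"] by (simp add: field_simps)
  have "norm (free_outer gw gd eps aw ad m S B w_prev d0 - free_outer gw gd eps aw ad m S' B w'_prev d0)
      \<le> d + r * d + (if s \<in> B then r * \<kappa> else 0)" if "B \<in> batches n b" for B
  proof -
    define K where "K = (if s \<in> B then \<kappa> else 0)"
    have B: "finite B" "card B = b" "B \<noteq> {}"
      using that b_pos by (auto simp: batches_def intro: finite_subset)
    have "q ^ (m - 1) * (d + K) \<ge> 0"
      using aw_pos ad_pos eps_pos psi_pos beta_pos L_pos by (simp add: q_def d_def K_def \<kappa>_def)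
    have "norm (free_outer gw gd eps aw ad m S B w_prev d0 - free_outer gw gd eps aw ad m S' B w'_prev d0)
        \<le> d + aw * \<beta> * m * q ^ (m - 1) * (d + K)"
      unfolding q_def d_def
      by (rule coupled_outer_dist_le[OF B(1,3) S_S' d0_in grad_lb[OF that] grad_lb'[OF that]])
        (use B b_pos beta_pos L_pos in \<open>auto simp: K_def \<kappa>_def\<close>)
    also have "\<dots> \<le> d + r * (d + K)"
      using mult_right_mono[OF \<open>aw * \<beta> * m \<le> \<beta> * c / real t\<close> \<open>q ^ (m - 1) * (d + K) \<ge> 0\<close>]
      by (simp add: r_def mult.assoc)
    finally show ?thesis by (cases "s \<in> B") (simp_all add: K_def algebra_simps)
  qed
  from expectation_batches_le[OF s_lt b_pos b_le this]
  have "measure_pmf.expectation (pmf_of_set (batches n b))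
          (\<lambda>B. norm (free_outer gw gd eps aw ad m S B w_prev d0 - free_outer gw gd eps aw ad m S' B w'_prev d0))
        \<le> d + r * d + r * X" (is "?E \<le> _")
    using b_pos by (simp add: \<kappa>_def X_def)
  hence "?E + X \<le> (1 + r) * (d + X)"
    by (simp add: algebra_simps)
  thus ?thesis by (simp only: r_def q_def d_def X_def)
qed

end
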